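(* Let $A, B\in\mathbb{R}^{m\times n}$ with $m<n$, $b\in\mathbb{R}^m$, and $s\in\{-1,1\}^n$, and let $B = M_B - N_B$ with $M_B,N_B\in\mathbb{R}^{m\times n}$ and $\operatorname{rank}(M_B) = m$. (a) Let $1\le p\le\infty$. If $M_B^\dagger b \le 0$, $M_B^\dagger [N_B+A\operatorname{diag}(s)] \ge 0$ and $\|M_B^\dagger [N_B+A\operatorname{diag}(s)]\|_p < 1$, then there exists a nonnegative solution $y_*\in\mathbb{R}^n$ of the linear system $[A\operatorname{diag}(s)-B]y=b$ such that $x_* = \operatorname{diag}(s)y_*$ is a solution of $Ax-B|x|=b$. (b) If $M_B^\dagger b < 0$ and $\|M_B^\dagger [N_B+A\operatorname{diag}(s)]\|_\infty < \gamma/2$, where $\gamma = \dfrac{\min_i|(M_B^\dagger b)_i|}{\max_i|(M_B^\dagger b)_i|}$, then $Ax-B|x|=b$ has infinitely many solutions with the sign pattern $s$.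
   Context: $M^\dagger$ is the Moore–Penrose inverse; $|x|$ is the entrywise absolute value; $\operatorname{diag}(s)$ is the diagonal matrix with diagonal $s$. Vector/matrix inequalities ($\le,<,\ge$) are entrywise. $\|\cdot\|_p$ on matrices is the operator norm induced by the vector $p$-norm. A vector $x$ has sign pattern $s$ if $\operatorname{sign}(x_{(i)})=s_{(i)}$ for all $i$. *)

theory Defs
  imports "HOL-Analysis.Analysis" "HOL-Library.Extended_Real"
begin

definition mp_inverse :: "real^'n^'m \<Rightarrow> real^'m^'n" where
  "mp_inverse M = (THE X. M ** X ** M = M \<and> X ** M ** X = X \<and>
       transpose (M ** X) = M ** X \<and> transpose (X ** M) = X ** M)"

definition vabs :: "real^'n \<Rightarrow> real^'n" where
  "vabs x = (\<chi> i. \<bar>x $ i\<bar>)"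

definition diagm :: "real^'n \<Rightarrow> real^'n^'n" where
  "diagm s = (\<chi> i j. if i = j then s $ i else 0)"

definition vpnorm :: "ereal \<Rightarrow> real^'n \<Rightarrow> real" where
  "vpnorm p x = (if p = \<infinity> then Max (range (\<lambda>i. \<bar>x $ i\<bar>))
                 else (\<Sum>i\<in>UNIV. \<bar>x $ i\<bar> powr real_of_ereal p) powr (1 / real_of_ereal p))"

definition opnorm :: "ereal \<Rightarrow> real^'n^'m \<Rightarrow> real" where
  "opnorm p M = Sup {vpnorm p (M *v x) / vpnorm p x | x. x \<noteq> 0}"

end

theory Submission
  imports Defs
begin

text \<open>
  If \<open>M\<^sub>B X = I\<close> and \<open>C = X (N\<^sub>B + A diag(s))\<close>, every fixed point of \<open>y \<mapsto> C y - X b\<close>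
  solves \<open>[A diag(s) - B] y = b\<close>, and for \<open>y \<ge> 0\<close> the vector \<open>x = diag(s) y\<close> satisfies
  \<open>|x| = y\<close>, hence solves \<open>A x - B |x| = b\<close>. A bound \<open>\<parallel>C\<parallel>\<^sub>p < 1\<close> makes \<open>I - C\<close> injective,
  so the fixed point exists; if moreover \<open>C \<ge> 0\<close> and \<open>-X b \<ge> 0\<close>, the negative part \<open>u\<close> of \<open>y\<close>
  satisfies \<open>0 \<le> u \<le> C u\<close>, which forces \<open>u = 0\<close>.
  In (b) the fixed point obeys \<open>\<parallel>y\<parallel>\<^sub>\<infinity> \<le> 2 \<parallel>X b\<parallel>\<^sub>\<infinity>\<close>, so \<open>|(C y)\<^sub>i| < min\<^sub>j |(X b)\<^sub>j|\<close>
  and \<open>y\<close> is strictly positive. Since \<open>m < n\<close>, \<open>A diag(s) - B\<close> has a nontrivial kernel, and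
  moving \<open>y\<close> along it inside the open positive orthant yields infinitely many solutions.
\<close>

lemma penrose_conditions_unique:
  fixes M :: "real^'n^'m" and X Y :: "real^'m^'n"
  assumes X: "M ** X ** M = M" "X ** M ** X = X"
      "transpose (M ** X) = M ** X" "transpose (X ** M) = X ** M"
    and Y: "M ** Y ** M = M" "Y ** M ** Y = Y"
      "transpose (M ** Y) = M ** Y" "transpose (Y ** M) = Y ** M"
  shows "X = Y"
proof -
  have "X = X ** transpose (M ** X)" using X(2,3) by (simp add: matrix_mul_assoc)
  also have "\<dots> = X ** transpose X ** transpose (M ** Y ** M)"
    using Y(1) by (simp add: matrix_transpose_mul matrix_mul_assoc)
  also have "\<dots> = X ** transpose (M ** X) ** transpose (M ** Y)"
    by (simp add: matrix_transpose_mul matrix_mul_assoc)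
  also have "\<dots> = X ** M ** Y"
    using X(2,3) Y(3) by (simp add: matrix_mul_assoc)
  finally have XMY: "X = X ** M ** Y" .
  have "Y = transpose (Y ** M) ** Y" using Y(2,4) by (simp add: matrix_mul_assoc)
  also have "\<dots> = transpose (M ** X ** M) ** transpose Y ** Y"
    using X(1) by (simp add: matrix_transpose_mul matrix_mul_assoc)
  also have "\<dots> = transpose (X ** M) ** transpose (Y ** M) ** Y"
    by (simp add: matrix_transpose_mul matrix_mul_assoc)
  also have "\<dots> = X ** M ** Y"
    using X(4) Y(2,4) by (metis matrix_mul_assoc)
  finally show ?thesis using XMY by simp
qed

lemma inj_matrix_mul_transpose:
  fixes M :: "real^'n^'m"
  assumes "rank M = CARD('m)"
  shows "inj ((*v) (M ** transpose M))"
proof (rule linear_injective_0[THEN iffD2, OF matrix_vector_mul_linear], intro allI impI)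
  fix x assume "(M ** transpose M) *v x = 0"
  then have "inner (transpose M *v x) (transpose M *v x) = 0"
    by (metis dot_lmul_matrix inner_zero_right matrix_vector_mul_assoc transpose_matrix_vector)
  moreover have "inj ((*v) (transpose M))"
    using assms full_rank_injective[of "transpose M"] by (simp add: rank_transpose)
  ultimately show "x = 0" by (metis inj_eq inner_eq_zero_iff matrix_vector_mult_0_right)
qed

lemma mp_inverse_right_inverse:
  fixes M :: "real^'n^'m"
  assumes "rank M = CARD('m)"
  shows "M ** mp_inverse M = mat 1"
proof -
  let ?G = "M ** transpose M"
  have "surj ((*v) ?G)"
    using inj_matrix_mul_transpose[OF assms] full_rank_injective[of ?G] full_rank_surjective[of ?G]
    by simp
  then obtain Gi where GGi: "?G ** Gi = mat 1"
    using matrix_right_invertible_surjective by blast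
  then have "transpose Gi ** ?G = mat 1"
    by (metis matrix_transpose_mul transpose_mat transpose_transpose matrix_left_right_inverse)
  then have Gi_sym: "transpose Gi = Gi"
    by (metis GGi matrix_mul_assoc matrix_mul_lid matrix_mul_rid)
  define X where "X = transpose M ** Gi"
  have MX: "M ** X = mat 1" using GGi by (simp add: X_def matrix_mul_assoc)
  have penrose: "M ** X ** M = M \<and> X ** M ** X = X \<and>
      transpose (M ** X) = M ** X \<and> transpose (X ** M) = X ** M"
    using MX Gi_sym by (simp add: X_def matrix_mul_assoc[symmetric] matrix_transpose_mul)
  have "mp_inverse M = X"
    unfolding mp_inverse_def using penrose_conditions_unique penrose by (intro the_equality) blast+
  with MX show ?thesis by simp
qed

lemma abs_component_le_vpnorm:
  assumes "1 \<le> p"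
  shows "\<bar>x $ i\<bar> \<le> vpnorm p x"
proof (cases "p = \<infinity>")
  case True
  then show ?thesis by (simp add: vpnorm_def)
next
  case False
  define r where "r = real_of_ereal p"
  have r: "1 \<le> r" using assms False by (cases p) (auto simp: r_def)
  have "\<bar>x $ i\<bar> = (\<bar>x $ i\<bar> powr r) powr (1 / r)"
    using r by (simp add: powr_powr)
  also have "\<dots> \<le> (\<Sum>j\<in>UNIV. \<bar>x $ j\<bar> powr r) powr (1 / r)"
    by (rule powr_mono2) (use r in \<open>auto intro: member_le_sum\<close>)
  finally show ?thesis using False by (simp add: vpnorm_def r_def)
qed

lemma vpnorm_nonneg:
  assumes "1 \<le> p"
  shows "0 \<le> vpnorm p x"
  using abs_component_le_vpnorm[OF assms] abs_ge_zero order_trans by blast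

lemma vpnorm_pos:
  assumes "1 \<le> p" "x \<noteq> 0"
  shows "0 < vpnorm p x"
proof -
  obtain i where "x $ i \<noteq> 0" using assms(2) by (metis vec_eq_iff zero_index)
  then show ?thesis using abs_component_le_vpnorm[OF assms(1), of x i] by simp
qed

lemma vpnorm_zero [simp]: "vpnorm p 0 = 0"
  by (simp add: vpnorm_def)

lemma vpnorm_infinity_attained: "\<exists>i. vpnorm \<infinity> x = \<bar>x $ i\<bar>"
proof -
  have "Max (range (\<lambda>i. \<bar>x $ i\<bar>)) \<in> range (\<lambda>i. \<bar>x $ i\<bar>)"
    by (rule Max_in) auto
  then obtain i where "Max (range (\<lambda>i. \<bar>x $ i\<bar>)) = \<bar>x $ i\<bar>" by blast
  then show ?thesis by (auto simp: vpnorm_def)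
qed

lemma vpnorm_le_card_vpnorm_infinity:
  fixes x :: "real^'n"
  assumes "1 \<le> p"
  shows "vpnorm p x \<le> real CARD('n) * vpnorm \<infinity> x"
proof -
  define M where "M = vpnorm \<infinity> x"
  have M: "0 \<le> M" "\<And>j. \<bar>x $ j\<bar> \<le> M"
    unfolding M_def by (simp_all add: vpnorm_nonneg abs_component_le_vpnorm)
  have card: "1 \<le> real CARD('n)" by simp
  show ?thesis
  proof (cases "p = \<infinity>")
    case True
    then show ?thesis using M card by (simp add: M_def mult_le_cancel_right1)
  next
    case False
    define r where "r = real_of_ereal p"
    have r: "1 \<le> r" using assms False by (cases p) (auto simp: r_def)
    have "(\<Sum>j\<in>UNIV. \<bar>x $ j\<bar> powr r) \<le> (\<Sum>j\<in>(UNIV::'n set). M powr r)"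
      by (intro sum_mono powr_mono2) (use r M in auto)
    then have "vpnorm p x \<le> (real CARD('n) * M powr r) powr (1/r)"
      using False r unfolding vpnorm_def r_def by (auto intro!: powr_mono2 sum_nonneg)
    also have "\<dots> = real CARD('n) powr (1/r) * M"
      using r M by (simp add: powr_mult powr_powr)
    also have "\<dots> \<le> real CARD('n) powr 1 * M"
      using r M card by (intro mult_right_mono powr_mono) auto
    finally show ?thesis by (simp add: M_def)
  qed
qed

lemma vpnorm_mono:
  assumes "1 \<le> p" "\<And>i. \<bar>u $ i\<bar> \<le> \<bar>v $ i\<bar>"
  shows "vpnorm p u \<le> vpnorm p v"
proof (cases "p = \<infinity>")
  case True
  obtain i where "vpnorm \<infinity> u = \<bar>u $ i\<bar>" using vpnorm_infinity_attained by blast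
  then show ?thesis
    using True assms(2)[of i] abs_component_le_vpnorm[of \<infinity> v i] by simp
next
  case False
  define r where "r = real_of_ereal p"
  have r: "1 \<le> r" using assms False by (cases p) (auto simp: r_def)
  have "(\<Sum>j\<in>UNIV. \<bar>u $ j\<bar> powr r) \<le> (\<Sum>j\<in>UNIV. \<bar>v $ j\<bar> powr r)"
    by (intro sum_mono powr_mono2) (use r assms(2) in auto)
  then show ?thesis
    using False r unfolding vpnorm_def r_def by (auto intro!: powr_mono2 sum_nonneg)
qed

lemma vpnorm_infinity_matrix_vector_le:
  fixes M :: "real^'n^'m"
  shows "vpnorm \<infinity> (M *v x) \<le> (\<Sum>i\<in>UNIV. \<Sum>j\<in>UNIV. \<bar>M $ i $ j\<bar>) * vpnorm \<infinity> x"
proof -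
  obtain i where i: "vpnorm \<infinity> (M *v x) = \<bar>(M *v x) $ i\<bar>"
    using vpnorm_infinity_attained by blast
  have x: "\<bar>x $ j\<bar> \<le> vpnorm \<infinity> x" "0 \<le> vpnorm \<infinity> x" for j
    by (simp_all add: vpnorm_nonneg abs_component_le_vpnorm)
  have "\<bar>(M *v x) $ i\<bar> \<le> (\<Sum>j\<in>UNIV. \<bar>M $ i $ j\<bar> * \<bar>x $ j\<bar>)"
    unfolding matrix_vector_mult_def by (simp add: abs_mult[symmetric] sum_abs)
  also have "\<dots> \<le> (\<Sum>j\<in>UNIV. \<bar>M $ i $ j\<bar>) * vpnorm \<infinity> x"
    unfolding sum_distrib_right using x by (intro sum_mono mult_left_mono) auto
  also have "\<dots> \<le> (\<Sum>i\<in>UNIV. \<Sum>j\<in>UNIV. \<bar>M $ i $ j\<bar>) * vpnorm \<infinity> x"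
    using x by (intro mult_right_mono member_le_sum) (auto intro: sum_nonneg)
  finally show ?thesis using i by simp
qed

lemma bdd_above_opnorm_quotients:
  fixes M :: "real^'n^'m"
  assumes p: "1 \<le> p"
  shows "bdd_above {vpnorm p (M *v x) / vpnorm p x | x. x \<noteq> 0}"
proof -
  define K where "K = (\<Sum>i\<in>UNIV. \<Sum>j\<in>UNIV. \<bar>M $ i $ j\<bar>)"
  have "vpnorm p (M *v x) / vpnorm p x \<le> real CARD('m) * K" if "x \<noteq> 0" for x
  proof -
    obtain i where i: "vpnorm \<infinity> x = \<bar>x $ i\<bar>" using vpnorm_infinity_attained by blast
    have "vpnorm p (M *v x) \<le> real CARD('m) * vpnorm \<infinity> (M *v x)"
      by (rule vpnorm_le_card_vpnorm_infinity[OF p])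
    also have "\<dots> \<le> real CARD('m) * (K * vpnorm \<infinity> x)"
      unfolding K_def by (intro mult_left_mono vpnorm_infinity_matrix_vector_le) auto
    also have "\<dots> \<le> real CARD('m) * K * vpnorm p x"
      using abs_component_le_vpnorm[OF p, of x i] i
      by (simp add: K_def mult.assoc mult_left_mono sum_nonneg)
    finally show ?thesis using vpnorm_pos[OF p that] by (simp add: pos_divide_le_eq)
  qed
  then show ?thesis by (auto simp: bdd_above_def)
qed

lemma vpnorm_matrix_vector_le_opnorm:
  assumes p: "1 \<le> p"
  shows "vpnorm p (M *v x) \<le> opnorm p M * vpnorm p x"
proof (cases "x = 0")
  case False
  have "vpnorm p (M *v x) / vpnorm p x \<le> opnorm p M"
    unfolding opnorm_def by (rule cSup_upper) (use False bdd_above_opnorm_quotients[OF p] in auto)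
  then show ?thesis using vpnorm_pos[OF p False] by (simp add: pos_divide_le_eq)
qed simp

lemma opnorm_nonneg:
  fixes M :: "real^'n^'m"
  assumes p: "1 \<le> p"
  shows "0 \<le> opnorm p M"
proof -
  have one: "(1::real^'n) \<noteq> 0" by (simp add: vec_eq_iff)
  have "0 \<le> vpnorm p (M *v 1) / vpnorm p (1::real^'n)"
    by (intro divide_nonneg_pos vpnorm_nonneg[OF p] vpnorm_pos[OF p one])
  also have "\<dots> \<le> opnorm p M"
    unfolding opnorm_def by (rule cSup_upper) (use one bdd_above_opnorm_quotients[OF p] in auto)
  finally show ?thesis .
qed

lemma opnorm_lt_1_imp_eq_0:
  assumes p: "1 \<le> p" and C: "opnorm p C < 1" and x: "vpnorm p x \<le> vpnorm p (C *v x)"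
  shows "x = 0"
proof (rule ccontr)
  assume "x \<noteq> 0"
  have "vpnorm p x \<le> opnorm p C * vpnorm p x"
    using x vpnorm_matrix_vector_le_opnorm[OF p] order_trans by blast
  then show False using vpnorm_pos[OF p \<open>x \<noteq> 0\<close>] C by (simp add: mult_le_cancel_right1)
qed

lemma opnorm_lt_1_fixed_point_exists:
  fixes C :: "real^'n^'n"
  assumes p: "1 \<le> p" and C: "opnorm p C < 1"
  obtains y where "y = C *v y + d"
proof -
  have "inj ((*v) (mat 1 - C))"
    using opnorm_lt_1_imp_eq_0[OF p C]
    by (intro linear_injective_0[THEN iffD2, OF matrix_vector_mul_linear])
      (simp add: matrix_vector_mult_diff_rdistrib)
  then have "surj ((*v) (mat 1 - C))"
    using full_rank_injective[of "mat 1 - C"] full_rank_surjective[of "mat 1 - C"] by simp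
  then obtain y where "(mat 1 - C) *v y = d" by (metis surjD)
  then have "y - C *v y = d" by (simp add: matrix_vector_mult_diff_rdistrib)
  then have "y = C *v y + d" by (metis diff_add_cancel add.commute)
  then show thesis by (rule that)
qed

lemma opnorm_lt_1_fixed_point_nonneg:
  fixes C :: "real^'n^'n"
  assumes p: "1 \<le> p" and C: "opnorm p C < 1" and C_nonneg: "\<forall>i j. 0 \<le> C $ i $ j"
    and d: "\<forall>i. 0 \<le> d $ i" and y: "y = C *v y + d"
  shows "\<forall>i. 0 \<le> y $ i"
proof -
  define u where "u = (\<chi> i. max (- y $ i) 0)"
  have C_mono: "(C *v v) $ i \<le> (C *v w) $ i" if "\<And>j. v $ j \<le> w $ j" for v w i
    unfolding matrix_vector_mult_def using C_nonneg that by (auto intro!: sum_mono mult_left_mono)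
  have Cu_nonneg: "0 \<le> (C *v u) $ i" for i
    using C_mono[of 0 u] by (simp add: u_def)
  have "u $ i \<le> (C *v u) $ i" for i
  proof -
    have "0 \<le> (C *v (u + y)) $ i"
      using C_mono[of 0 "u + y" i] by (simp add: u_def)
    then have "- (C *v y) $ i \<le> (C *v u) $ i"
      by (simp add: matrix_vector_right_distrib)
    moreover have "y $ i = (C *v y) $ i + d $ i" using y by (metis vector_add_component)
    ultimately show ?thesis using Cu_nonneg[of i] d[rule_format, of i] by (auto simp: u_def)
  qed
  then have "vpnorm p u \<le> vpnorm p (C *v u)"
    using Cu_nonneg by (intro vpnorm_mono[OF p]) (auto simp: u_def)
  then have "u = 0" by (rule opnorm_lt_1_imp_eq_0[OF p C])
  then have "\<forall>i. max (- y $ i) 0 = 0" by (simp add: u_def vec_eq_iff)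
  then show ?thesis by (metis max.bounded_iff neg_le_0_iff_le order_refl)
qed

lemma opnorm_infinity_small_fixed_point_pos:
  fixes C :: "real^'n^'n"
  assumes d: "\<forall>i. 0 < d $ i"
    and C: "opnorm \<infinity> C < Min (range (\<lambda>i. \<bar>d $ i\<bar>)) / vpnorm \<infinity> d / 2"
  obtains y where "y = C *v y + d" "\<forall>i. 0 < y $ i"
proof -
  define q where "q = opnorm \<infinity> C"
  define dmin where "dmin = Min (range (\<lambda>i. \<bar>d $ i\<bar>))"
  have pinf: "(1::ereal) \<le> \<infinity>" by simp
  have dmin: "dmin \<le> d $ i" for i
    using d by (simp add: dmin_def abs_of_pos)
  obtain k where k: "vpnorm \<infinity> d = \<bar>d $ k\<bar>" using vpnorm_infinity_attained by blast
  have dk: "0 < d $ k" using d by simp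
  have q_nonneg: "0 \<le> q" using opnorm_nonneg[OF pinf] by (simp add: q_def)
  have q_lt: "q < dmin / d $ k / 2" using C k dk by (simp add: q_def dmin_def)
  moreover have "dmin / d $ k / 2 \<le> 1/2"
    using dmin[of k] dk by (simp add: divide_right_mono)
  ultimately have "q < 1/2" by linarith
  then obtain y where y: "y = C *v y + d"
    using opnorm_lt_1_fixed_point_exists[OF pinf, of C d] by (auto simp: q_def)
  have Cy: "\<bar>(C *v y) $ i\<bar> \<le> q * vpnorm \<infinity> y" for i
    using abs_component_le_vpnorm[OF pinf, of "C *v y" i] vpnorm_matrix_vector_le_opnorm[OF pinf, of C y]
    by (simp add: q_def)
  have yi: "y $ i = (C *v y) $ i + d $ i" for i using y by (metis vector_add_component)
  obtain j where j: "vpnorm \<infinity> y = \<bar>y $ j\<bar>" using vpnorm_infinity_attained by blast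
  have "q * vpnorm \<infinity> y \<le> 1/2 * vpnorm \<infinity> y"
    using \<open>q < 1/2\<close> vpnorm_nonneg[OF pinf] by (intro mult_right_mono) auto
  then have "vpnorm \<infinity> y \<le> 2 * d $ k"
    using yi[of j] Cy[of j] j k abs_of_pos[OF dk] abs_component_le_vpnorm[OF pinf, of d j]
      abs_triangle_ineq[of "(C *v y) $ j" "d $ j"] by linarith
  then have "q * vpnorm \<infinity> y \<le> q * (2 * d $ k)"
    using q_nonneg by (rule mult_left_mono)
  also have "\<dots> < dmin" using q_lt dk by (simp add: field_simps)
  finally have Cy_small: "q * vpnorm \<infinity> y < dmin" .
  have "0 < y $ i" for i
  proof -
    have "- (C *v y) $ i \<le> q * vpnorm \<infinity> y" using Cy[of i] by (simp add: abs_le_iff)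
    then show ?thesis using yi[of i] dmin[of i] Cy_small by linarith
  qed
  then show thesis using y that by blast
qed

lemma splitting_fixed_point_solves:
  fixes A B MB NB :: "real^'n^'m" and X :: "real^'m^'n" and D :: "real^'n^'n"
  assumes MX: "MB ** X = mat 1" and B: "B = MB - NB"
    and y: "y = (X ** (NB + A ** D)) *v y - X *v b"
  shows "(A ** D - B) *v y = b"
proof -
  have "MB *v y = MB *v ((X ** (NB + A ** D)) *v y - X *v b)"
    using y by (rule arg_cong)
  also have "\<dots> = (NB + A ** D) *v y - b"
    unfolding matrix_vector_mult_diff_distrib matrix_vector_mul_assoc matrix_mul_assoc MX by simp
  finally show ?thesis
    using B by (simp add: matrix_vector_mult_diff_rdistrib matrix_vector_mult_add_rdistrib)
qed

lemma diagm_mult_vector_component: "(diagm s *v y) $ i = s $ i * y $ i"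
  by (simp add: matrix_vector_mult_def diagm_def if_distrib[of "\<lambda>a. a * _"] cong: if_cong)

lemma abs_value_equation_diagm:
  assumes s: "\<forall>i. s $ i = 1 \<or> s $ i = -1" and y: "\<forall>i. 0 \<le> y $ i"
  shows "A *v (diagm s *v y) - B *v vabs (diagm s *v y) = (A ** diagm s - B) *v y"
proof -
  have "\<bar>s $ i\<bar> = 1" for i using s by (metis abs_minus_cancel abs_one)
  then have "vabs (diagm s *v y) = y"
    using y by (simp add: vabs_def vec_eq_iff diagm_mult_vector_component abs_mult)
  then show ?thesis
    by (simp add: matrix_vector_mul_assoc matrix_vector_mult_diff_rdistrib)
qed

lemma infinite_positive_solutions:
  fixes K :: "real^'n^'m"
  assumes mn: "CARD('m) < CARD('n)" and y: "K *v y = b" "\<forall>i. 0 < y $ i"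
  shows "infinite {w. K *v w = b \<and> (\<forall>i. 0 < w $ i)}"
proof -
  have "rank K \<noteq> CARD('n)" using rank_bound[of K] mn by linarith
  then obtain z where z: "z \<noteq> 0" "K *v z = 0"
    using matrix_nonfull_linear_equations_eq by blast
  have "open {w::real^'n. \<forall>i. 0 < w $ i}"
  proof -
    have "{w::real^'n. \<forall>i. 0 < w $ i} = (\<Inter>i. {w. w $ i > 0})" by auto
    then show ?thesis by (auto intro!: open_halfspace_component_gt_cart)
  qed
  then obtain r where r: "0 < r" "ball y r \<subseteq> {w. \<forall>i. 0 < w $ i}"
    using y(2) open_contains_ball by blast
  define f where "f t = y + t *\<^sub>R z" for t
  have "inj f" using z(1) by (auto simp: inj_on_def f_def)
  moreover have "infinite {0<..<r / norm z}" using r z by simp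
  ultimately have "infinite (f ` {0<..<r / norm z})"
    using finite_imageD inj_on_subset by blast
  moreover have "f ` {0<..<r / norm z} \<subseteq> {w. K *v w = b \<and> (\<forall>i. 0 < w $ i)}"
  proof safe
    fix t :: real assume t: "t \<in> {0<..<r / norm z}"
    show "K *v f t = b"
      using y z by (simp add: f_def matrix_vector_right_distrib matrix_vector_mult_scaleR)
    have "f t \<in> ball y r"
      using t z by (simp add: f_def dist_norm field_simps)
    then show "0 < f t $ i" for i using r by blast
  qed
  ultimately show ?thesis using finite_subset by blast
qed

lemma infinite_solutions_with_sign_pattern:
  fixes A B :: "real^'n^'m"
  assumes mn: "CARD('m) < CARD('n)" and s: "\<forall>i. s $ i = 1 \<or> s $ i = -1"
    and y: "(A ** diagm s - B) *v y = b" "\<forall>i. 0 < y $ i"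
  shows "infinite {x. A *v x - B *v vabs x = b \<and> (\<forall>i. sgn (x $ i) = s $ i)}"
proof -
  let ?W = "{w. (A ** diagm s - B) *v w = b \<and> (\<forall>i. 0 < w $ i)}"
  have "s $ i * s $ i = 1" for i using s[rule_format, of i] by auto
  then have "diagm s *v (diagm s *v w) = w" for w
    by (simp add: vec_eq_iff diagm_mult_vector_component mult.assoc[symmetric])
  then have "inj ((*v) (diagm s))" by (metis injI)
  then have "infinite ((*v) (diagm s) ` ?W)"
    using infinite_positive_solutions[OF mn y] finite_imageD inj_on_subset by blast
  moreover have "(*v) (diagm s) ` ?W \<subseteq> {x. A *v x - B *v vabs x = b \<and> (\<forall>i. sgn (x $ i) = s $ i)}"
  proof
    fix x assume "x \<in> (*v) (diagm s) ` ?W"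
    then obtain w where x: "x = diagm s *v w"
      and w: "(A ** diagm s - B) *v w = b" "\<forall>i. 0 < w $ i" by blast
    have "\<forall>i. 0 \<le> w $ i" using w(2) by (simp add: less_imp_le)
    then have "A *v x - B *v vabs x = b"
      using abs_value_equation_diagm[OF s, of w A B] w(1) x by simp
    moreover have "sgn (x $ i) = s $ i" for i
      using s[rule_format, of i] w(2) by (auto simp: x diagm_mult_vector_component sgn_mult)
    ultimately show "x \<in> {x. A *v x - B *v vabs x = b \<and> (\<forall>i. sgn (x $ i) = s $ i)}"
      by simp
  qed
  ultimately show ?thesis using finite_subset by blast
qed

lemma abs_value_equation_nonneg_solution:
  fixes A B MB NB :: "real^'n^'m" and X :: "real^'m^'n"
  assumes s: "\<forall>i. s $ i = 1 \<or> s $ i = -1" and MX: "MB ** X = mat 1" and B: "B = MB - NB"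
    and p: "1 \<le> p" and Xb: "\<forall>i. (X *v b) $ i \<le> 0"
    and C_nonneg: "\<forall>i j. 0 \<le> (X ** (NB + A ** diagm s)) $ i $ j"
    and C: "opnorm p (X ** (NB + A ** diagm s)) < 1"
  shows "\<exists>y. (\<forall>i. 0 \<le> y $ i) \<and> (A ** diagm s - B) *v y = b \<and>
    A *v (diagm s *v y) - B *v vabs (diagm s *v y) = b"
proof -
  obtain y where y: "y = (X ** (NB + A ** diagm s)) *v y + - (X *v b)"
    using opnorm_lt_1_fixed_point_exists[OF p C] by blast
  have y_nonneg: "\<forall>i. 0 \<le> y $ i"
    using Xb by (intro opnorm_lt_1_fixed_point_nonneg[OF p C C_nonneg _ y]) simp
  moreover have "(A ** diagm s - B) *v y = b"
    using y by (intro splitting_fixed_point_solves[OF MX B]) simp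
  ultimately show ?thesis using abs_value_equation_diagm[OF s y_nonneg] by auto
qed

lemma abs_value_equation_infinitely_many_solutions:
  fixes A B MB NB :: "real^'n^'m" and X :: "real^'m^'n"
  assumes mn: "CARD('m) < CARD('n)" and s: "\<forall>i. s $ i = 1 \<or> s $ i = -1"
    and MX: "MB ** X = mat 1" and B: "B = MB - NB" and Xb: "\<forall>i. (X *v b) $ i < 0"
    and C: "opnorm \<infinity> (X ** (NB + A ** diagm s)) <
      (Min (range (\<lambda>i. \<bar>(X *v b) $ i\<bar>)) / Max (range (\<lambda>i. \<bar>(X *v b) $ i\<bar>))) / 2"
  shows "infinite {x. A *v x - B *v vabs x = b \<and> (\<forall>i. sgn (x $ i) = s $ i)}"
proof -
  have "\<forall>i. 0 < (- (X *v b)) $ i" using Xb by simp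
  moreover have "opnorm \<infinity> (X ** (NB + A ** diagm s)) <
      Min (range (\<lambda>i. \<bar>(- (X *v b)) $ i\<bar>)) / vpnorm \<infinity> (- (X *v b)) / 2"
    using C by (simp add: vpnorm_def)
  ultimately obtain y where y: "y = (X ** (NB + A ** diagm s)) *v y + - (X *v b)"
    and y_pos: "\<forall>i. 0 < y $ i"
    by (rule opnorm_infinity_small_fixed_point_pos)
  have "(A ** diagm s - B) *v y = b"
    using y by (intro splitting_fixed_point_solves[OF MX B]) simp
  then show ?thesis using y_pos by (rule infinite_solutions_with_sign_pattern[OF mn s])
qed

theorem theorem3p5:
  fixes A B MB NB :: "real^'n^'m" and b :: "real^'m" and s :: "real^'n"
  assumes "CARD('m) < CARD('n)"
    and "\<forall>i. s $ i = 1 \<or> s $ i = -1"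
    and "B = MB - NB"
    and "rank MB = CARD('m)"
  shows "(\<forall>p::ereal. 1 \<le> p \<longrightarrow>
            (\<forall>i. (mp_inverse MB *v b) $ i \<le> 0) \<longrightarrow>
            (\<forall>i j. (mp_inverse MB ** (NB + A ** diagm s)) $ i $ j \<ge> 0) \<longrightarrow>
            opnorm p (mp_inverse MB ** (NB + A ** diagm s)) < 1 \<longrightarrow>
            (\<exists>y. (\<forall>i. y $ i \<ge> 0) \<and> (A ** diagm s - B) *v y = b \<and>
                 A *v (diagm s *v y) - B *v vabs (diagm s *v y) = b))
       \<and> ((\<forall>i. (mp_inverse MB *v b) $ i < 0) \<and>
           opnorm \<infinity> (mp_inverse MB ** (NB + A ** diagm s)) <
             (Min (range (\<lambda>i. \<bar>(mp_inverse MB *v b) $ i\<bar>)) /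
              Max (range (\<lambda>i. \<bar>(mp_inverse MB *v b) $ i\<bar>))) / 2
           \<longrightarrow> infinite {x. A *v x - B *v vabs x = b \<and> (\<forall>i. sgn (x $ i) = s $ i)})"
proof -
  have MX: "MB ** mp_inverse MB = mat 1" by (rule mp_inverse_right_inverse[OF assms(4)])
  show ?thesis
    using abs_value_equation_nonneg_solution[OF assms(2) MX assms(3)]
      abs_value_equation_infinitely_many_solutions[OF assms(1,2) MX assms(3)]
    by blast
qed

end
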